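(* Regard $\mathscr B_{\mathbf s,\boldsymbol\varepsilon}$ as a subalgebra of $\mathscr Y_{\mathbf s}$ via $b_{ij}(u)\mapsto\sum_{a}\varepsilon_a t_{ia}(u)t'_{aj}(-u)$. Then $\mathscr B_{\mathbf s,\boldsymbol\varepsilon}$ is a left coideal subalgebra of $\mathscr Y_{\mathbf s}$, i.e. $\Delta(\mathscr B_{\mathbf s,\boldsymbol\varepsilon})\subset\mathscr Y_{\mathbf s}\otimes\mathscr B_{\mathbf s,\boldsymbol\varepsilon}$; explicitly, $$\Delta(b_{ij}(u))=\sum_{a,c=1}^\kappa (-1)^{(|c|+|j|)(|a|+|c|)}\,t_{ia}(u)t_{cj}'(-u)\otimes b_{ac}(u).$$
   Context: Fix integers $m,n\ge0$, $\kappa=m+n$, a parity sequence $\mathbf s\in\{\pm1\}^\kappa$ with exactly $m$ entries $1$, $s_i=(-1)^{|i|}$; $V=\mathbb C^{m|n}$ with basis $v_i$ of parity $|i|$, matrix units $E_{ij}$. The super Yangian $\mathscr Y_{\mathbf s}$ is generated by $t_{ij}^{(r)}$ ($r\ge1$) of parity $|i|+|j|$ with relations $[t_{ij}(u),t_{kl}(v)]=\frac{(-1)^{|i||j|+|i||k|+|j||k|}}{u-v}(t_{kj}(u)t_{il}(v)-t_{kj}(v)t_{il}(u))$, $t_{ij}(u)=\delta_{ij}+\sum_{r\ge1}t_{ij}^{(r)}u^{-r}$; it is a Hopf superalgebra with $\Delta(t_{ij}(u))=\sum_k t_{ik}(u)\otimes t_{kj}(u)$. With $T(u)=\sum(-1)^{|i||j|+|j|}t_{ij}(u)\otimes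 E_{ij}$, the series $t'_{ij}(u)$ are defined by $T(u)^{-1}=\sum(-1)^{|i||j|+|j|}t'_{ij}(u)\otimes E_{ij}$. Fix $\boldsymbol\varepsilon\in\{\pm1\}^\kappa$. The twisted super Yangian $\mathscr B_{\mathbf s,\boldsymbol\varepsilon}$ is generated by $b_{ij}^{(r)}$ with $b_{ij}(u)=\delta_{ij}\varepsilon_i+\sum_{r\ge1}b_{ij}^{(r)}u^{-r}$, $B(u)=\sum(-1)^{|i||j|+|j|}b_{ij}(u)\otimes E_{ij}$, and relations $R(u-v)B_1(u)R(u+v)B_2(v)=B_2(v)R(u+v)B_1(u)R(u-v)$, $B(u)B(-u)=1$, where $R(u)=1-\frac1u\sum_{i,j}s_jE_{ij}\otimes E_{ji}$; the map $b_{ij}(u)\mapsto\sum_a\varepsilon_at_{ia}(u)t'_{aj}(-u)$ is an injective superalgebra homomorphism $\mathscr B_{\mathbf s,\boldsymbol\varepsilon}\to\mathscr Y_{\mathbf s}$. *)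

theory Defs
  imports Complex_Main "HOL-Library.Poly_Mapping"
begin

type_synonym 'g fa = "'g list \<Rightarrow>\<^sub>0 complex"

definition fa_const :: "complex \<Rightarrow> 'g fa" where
  "fa_const c = Poly_Mapping.single [] c"

definition fa_gen :: "'g \<Rightarrow> 'g fa" where
  "fa_gen g = Poly_Mapping.single [g] 1"

definition fa_mult :: "'g fa \<Rightarrow> 'g fa \<Rightarrow> 'g fa" (infixl \<open>\<cdot>\<close> 70) where
  "p \<cdot> q = (\<Sum>v\<in>Poly_Mapping.keys p. \<Sum>w\<in>Poly_Mapping.keys q. Poly_Mapping.single (v @ w) (Poly_Mapping.lookup p v * Poly_Mapping.lookup q w))"

definition fa_prod :: "'g fa list \<Rightarrow> 'g fa" where
  "fa_prod xs = foldr fa_mult xs (fa_const 1)"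

definition fa_hom :: "('g \<Rightarrow> 'h fa) \<Rightarrow> 'g fa \<Rightarrow> 'h fa" where
  "fa_hom \<phi> p = (\<Sum>w\<in>Poly_Mapping.keys p. fa_const (Poly_Mapping.lookup p w) \<cdot> fa_prod (map \<phi> w))"

inductive_set ideal_gen :: "'g fa set \<Rightarrow> 'g fa set" for R :: "'g fa set" where
  gen: "r \<in> R \<Longrightarrow> r \<in> ideal_gen R"
| zero: "0 \<in> ideal_gen R"
| add: "x \<in> ideal_gen R \<Longrightarrow> y \<in> ideal_gen R \<Longrightarrow> x + y \<in> ideal_gen R"
| mult: "x \<in> ideal_gen R \<Longrightarrow> a \<cdot> x \<cdot> b \<in> ideal_gen R"

inductive_set subalg_gen :: "'g fa set \<Rightarrow> 'g fa set" for S :: "'g fa set" where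
  gen: "x \<in> S \<Longrightarrow> x \<in> subalg_gen S"
| const: "fa_const c \<in> subalg_gen S"
| add: "x \<in> subalg_gen S \<Longrightarrow> y \<in> subalg_gen S \<Longrightarrow> x + y \<in> subalg_gen S"
| mult: "x \<in> subalg_gen S \<Longrightarrow> y \<in> subalg_gen S \<Longrightarrow> x \<cdot> y \<in> subalg_gen S"

text \<open>Generators t_ij^(r) are encoded as triples (i,j,r); only those with i,j < kappa and
  r \<ge> 1 are genuine generators, all other triples are set to 0 by the relations.\<close>
type_synonym ygen = "nat \<times> nat \<times> nat"

definition par :: "(nat \<Rightarrow> int) \<Rightarrow> nat \<Rightarrow> nat" where
  "par s i = (if s i = 1 then 0 else 1)"

definition sgn :: "nat \<Rightarrow> complex" where
  "sgn e = (-1) ^ e"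

definition kdelta :: "nat \<Rightarrow> nat \<Rightarrow> 'g fa" where
  "kdelta i j = (if i = j then fa_const 1 else 0)"

definition tc :: "nat \<Rightarrow> nat \<Rightarrow> nat \<Rightarrow> ygen fa" where
  "tc r i j = (if r = 0 then kdelta i j else fa_gen (i, j, r))"

definition scomm :: "nat \<Rightarrow> nat \<Rightarrow> 'g fa \<Rightarrow> 'g fa \<Rightarrow> 'g fa" where
  "scomm p q x y = x \<cdot> y - fa_const (sgn (p * q)) \<cdot> (y \<cdot> x)"

text \<open>Defining relations of Y_s, coefficientwise form of
  (u - v)[t_ij(u), t_kl(v)] = sign (t_kj(u) t_il(v) - t_kj(v) t_il(u)), i.e. for r,s \<ge> 0:
  [t_ij^(r+1), t_kl^(s)] - [t_ij^(r), t_kl^(s+1)] = sign (t_kj^(r) t_il^(s) - t_kj^(s) t_il^(r)).\<close>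
definition yang_rels :: "nat \<Rightarrow> (nat \<Rightarrow> int) \<Rightarrow> ygen fa set" where
  "yang_rels \<kappa> s =
     {scomm (par s i + par s j) (par s k + par s l) (tc (Suc r) i j) (tc q k l)
      - scomm (par s i + par s j) (par s k + par s l) (tc r i j) (tc (Suc q) k l)
      - fa_const (sgn (par s i * par s j + par s i * par s k + par s j * par s k))
          \<cdot> (tc r k j \<cdot> tc q i l - tc q k j \<cdot> tc r i l)
      | i j k l r q. i < \<kappa> \<and> j < \<kappa> \<and> k < \<kappa> \<and> l < \<kappa>}
   \<union> {fa_gen (i, j, r) | i j r. \<not> (i < \<kappa> \<and> j < \<kappa> \<and> 1 \<le> r)}"

definition yang_ideal :: "nat \<Rightarrow> (nat \<Rightarrow> int) \<Rightarrow> ygen fa set" where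
  "yang_ideal \<kappa> s = ideal_gen (yang_rels \<kappa> s)"

text \<open>Presented by two copies of the generators (Inl = first tensor factor, Inr = second),
  the relations of each copy, and the super-commutation relations
  (x \<otimes> 1)(1 \<otimes> y) = (-1)^{|x||y|} (1 \<otimes> y)(x \<otimes> 1) between generators.
  So x \<otimes> y corresponds to iota1 x \<cdot> iota2 y.\<close>
definition iota1 :: "ygen fa \<Rightarrow> (ygen + ygen) fa" where
  "iota1 = fa_hom (\<lambda>g. fa_gen (Inl g))"

definition iota2 :: "ygen fa \<Rightarrow> (ygen + ygen) fa" where
  "iota2 = fa_hom (\<lambda>g. fa_gen (Inr g))"

definition gpar :: "(nat \<Rightarrow> int) \<Rightarrow> ygen \<Rightarrow> nat" where
  "gpar s g = (case g of (i, j, r) \<Rightarrow> par s i + par s j)"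

definition tens_rels :: "nat \<Rightarrow> (nat \<Rightarrow> int) \<Rightarrow> (ygen + ygen) fa set" where
  "tens_rels \<kappa> s = iota1 ` yang_rels \<kappa> s \<union> iota2 ` yang_rels \<kappa> s
     \<union> {fa_gen (Inl g) \<cdot> fa_gen (Inr h)
          - fa_const (sgn (gpar s g * gpar s h)) \<cdot> (fa_gen (Inr h) \<cdot> fa_gen (Inl g)) | g h. True}"

definition tens_ideal :: "nat \<Rightarrow> (nat \<Rightarrow> int) \<Rightarrow> (ygen + ygen) fa set" where
  "tens_ideal \<kappa> s = ideal_gen (tens_rels \<kappa> s)"

definition delta_gen :: "nat \<Rightarrow> ygen \<Rightarrow> (ygen + ygen) fa" where
  "delta_gen \<kappa> g = (case g of (i, j, r) \<Rightarrow>
     (\<Sum>p\<le>r. \<Sum>k<\<kappa>. iota1 (tc p i k) \<cdot> iota2 (tc (r - p) k j)))"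

definition Delta :: "nat \<Rightarrow> ygen fa \<Rightarrow> (ygen + ygen) fa" where
  "Delta \<kappa> = fa_hom (delta_gen \<kappa>)"

text \<open>Coefficients t'_ij^(r) of the inverse matrix T(u)^{-1}; with the sign conventions of
  T(u) these satisfy sum_k t_ik(u) t'_kj(u) = delta_ij, i.e. t'^(0) = delta and for r \<ge> 1
  t'_ij^(r) = - sum_{p=1}^r sum_k t_ik^(p) t'_kj^(r-p).\<close>
fun tpc :: "nat \<Rightarrow> nat \<Rightarrow> nat \<Rightarrow> nat \<Rightarrow> ygen fa" where
  "tpc \<kappa> 0 i j = kdelta i j"
| "tpc \<kappa> (Suc r) i j =
     - (\<Sum>p\<in>{1..Suc r}. \<Sum>k<\<kappa>. tc p i k \<cdot> tpc \<kappa> (Suc r - p) k j)"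

text \<open>Coefficient of u^{-r} in b_ij(u) = sum_a eps_a t_ia(u) t'_aj(-u)
  (for r = 0 this is eps_i delta_ij).\<close>
definition bc :: "nat \<Rightarrow> (nat \<Rightarrow> int) \<Rightarrow> nat \<Rightarrow> nat \<Rightarrow> nat \<Rightarrow> ygen fa" where
  "bc \<kappa> \<epsilon> r i j = (\<Sum>a<\<kappa>. fa_const (of_int (\<epsilon> a)) \<cdot>
      (\<Sum>p\<le>r. fa_const (sgn (r - p)) \<cdot> (tc p i a \<cdot> tpc \<kappa> (r - p) a j)))"

definition twisted_subalg :: "nat \<Rightarrow> (nat \<Rightarrow> int) \<Rightarrow> ygen fa set" where
  "twisted_subalg \<kappa> \<epsilon> = subalg_gen {bc \<kappa> \<epsilon> r i j | r i j. 1 \<le> r \<and> i < \<kappa> \<and> j < \<kappa>}"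

end

theory Submission
  imports Defs "HOL-Computational_Algebra.Formal_Power_Series"
begin

text \<open>Work with the generating series T(u), T'(u), B(u) as formal power series in 1/u whose
  coefficients live in the free algebras, so that every identity except one holds exactly.
  Since Delta is an algebra map with Delta T(u) = T(u) \<otimes> T(u) and T'(u) is the unique right
  inverse of T(u), Delta T'(u) is the reversed product of the two copies of T'(u). Hence
  Delta b(u) = \<Sum> (T(u) \<otimes> 1) (1 \<otimes> B(u)) (T'(-u) \<otimes> 1), and the only step that needs the
  relations of the super tensor product is moving the first-factor term T'(-u) \<otimes> 1 past
  1 \<otimes> B(u), which produces the sign of the formula. The coideal property follows because the
  elements congruent to sums of homogeneous y \<otimes> z with z in the twisted subalgebra form a
  subalgebra, which by the formula contains the image of every generator.\<close>

text \<open>Words form a monoid under concatenation, which turns \<open>'g fa\<close> into the monoid ring of the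
  free monoid: \<open>fa_mult\<close> is then the ring multiplication of \<open>Poly_Mapping\<close>.\<close>
instantiation list :: (type) monoid_add
begin
definition zero_list_def: "0 = []"
definition plus_list_def: "xs + ys = xs @ ys"
instance by standard (auto simp: zero_list_def plus_list_def)
end

lemma poly_mapping_sum_single:
  "(\<Sum>a\<in>Poly_Mapping.keys p. Poly_Mapping.single a (Poly_Mapping.lookup p a)) = p"
  by (rule poly_mapping_eqI) (simp add: lookup_sum lookup_single when_def in_keys_iff)

lemma fa_mult_eq_times: "p \<cdot> q = p * q"
proof -
  have "p * q = (\<Sum>v\<in>Poly_Mapping.keys p. Poly_Mapping.single v (Poly_Mapping.lookup p v))
      * (\<Sum>w\<in>Poly_Mapping.keys q. Poly_Mapping.single w (Poly_Mapping.lookup q w))"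
    by (simp add: poly_mapping_sum_single)
  also have "\<dots> = p \<cdot> q"
    unfolding fa_mult_def sum_distrib_left sum_distrib_right mult_single
    by (simp add: plus_list_def sum_distrib_left sum.swap[of _ "Poly_Mapping.keys q"])
  finally show ?thesis by simp
qed

lemma fa_const_eq_single0: "fa_const c = Poly_Mapping.single 0 c"
  by (simp add: fa_const_def zero_list_def)

lemma fa_const_mult: "fa_const a * fa_const b = fa_const (a * b)"
  by (simp add: fa_const_eq_single0 mult_single)

lemma fa_const_1 [simp]: "fa_const 1 = 1"
  by (simp add: fa_const_eq_single0)

lemma fa_const_0 [simp]: "fa_const 0 = 0"
  by (simp add: fa_const_eq_single0)

lemma fa_const_uminus: "fa_const (- a) = - fa_const a"
  by (simp add: fa_const_eq_single0 single_uminus)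

lemma fa_const_power: "fa_const (a ^ n) = fa_const a ^ n"
  by (induct n) (simp_all only: power_0 power_Suc fa_const_1 flip: fa_const_mult)

lemma fa_const_of_int: "fa_const (of_int k) = of_int k"
  by (simp add: fa_const_eq_single0)

lemma fa_const_sgn: "fa_const (sgn n) = (-1) ^ n"
  by (simp add: sgn_def fa_const_power fa_const_uminus)

lemma fa_const_commute: "x * fa_const c = fa_const c * (x :: 'g fa)"
proof -
  have "x * fa_const c
      = (\<Sum>a\<in>Poly_Mapping.keys x. Poly_Mapping.single a (Poly_Mapping.lookup x a)) * fa_const c"
    by (simp add: poly_mapping_sum_single)
  also have "\<dots> = fa_const c * (\<Sum>a\<in>Poly_Mapping.keys x. Poly_Mapping.single a (Poly_Mapping.lookup x a))"
    unfolding sum_distrib_left sum_distrib_right fa_const_eq_single0 mult_single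
    by (simp add: mult.commute)
  finally show ?thesis by (simp add: poly_mapping_sum_single)
qed

lemma fa_const_mult_mult: "fa_const (a * b) * (x * y) = fa_const a * x * (fa_const b * y)"
proof -
  have "fa_const a * x * (fa_const b * y) = fa_const a * (x * fa_const b) * y"
    by (simp add: mult.assoc)
  also have "\<dots> = fa_const a * (fa_const b * x) * y"
    by (simp only: fa_const_commute)
  finally show ?thesis by (simp add: mult.assoc flip: fa_const_mult)
qed

lemma fa_prod_eq_prod_list: "fa_prod xs = prod_list xs"
  by (induct xs) (simp_all add: fa_prod_def fa_mult_eq_times)

lemma kdelta_eq [simp]: "kdelta i j = (if i = j then 1 else 0)"
  by (simp add: kdelta_def)

lemma tc_0 [simp]: "tc 0 i j = (if i = j then 1 else 0)"
  by (simp add: tc_def)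

lemma tc_Suc [simp]: "tc (Suc r) i j = fa_gen (i, j, Suc r)"
  by (simp add: tc_def)

lemma minus_one_power_commute: "x * (-1) ^ n = ((-1) ^ n :: 'a :: ring_1) * x"
  by (cases "even n") simp_all

lemma mult_minus_one_power_left_commute: "x * ((-1) ^ k * y) = ((-1) ^ k :: 'a :: ring_1) * (x * y)"
  by (simp add: mult.assoc[symmetric] minus_one_power_commute)

lemma minus_one_power_mult_mult: "(-1) ^ a * ((-1) ^ b * x) = ((-1) ^ (a + b) :: 'a :: ring_1) * x"
  by (simp add: power_add mult.assoc)

lemma minus_one_power_mult_parity:
  assumes "even (a + e)" "even (b + f)"
  shows "((-1) ^ (a * b) :: 'a :: ring_1) = (-1) ^ (e * f)"
  using assms by (simp add: minus_one_power_iff)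

lemma fa_hom_eq:
  "fa_hom \<phi> p = (\<Sum>w\<in>Poly_Mapping.keys p. fa_const (Poly_Mapping.lookup p w) * prod_list (map \<phi> w))"
  by (simp add: fa_hom_def fa_mult_eq_times fa_prod_eq_prod_list)

lemma fa_hom_eq_sum_superset:
  assumes "finite S" "Poly_Mapping.keys p \<subseteq> S"
  shows "fa_hom \<phi> p = (\<Sum>w\<in>S. fa_const (Poly_Mapping.lookup p w) * prod_list (map \<phi> w))"
  unfolding fa_hom_eq
  by (rule sum.mono_neutral_left) (use assms in \<open>auto simp: in_keys_iff\<close>)

lemma fa_hom_add: "fa_hom \<phi> (p + q) = fa_hom \<phi> p + fa_hom \<phi> q"
proof -
  let ?S = "Poly_Mapping.keys p \<union> Poly_Mapping.keys q"
  have S: "finite ?S" by simp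
  have "fa_hom \<phi> (p + q)
      = (\<Sum>w\<in>?S. fa_const (Poly_Mapping.lookup (p + q) w) * prod_list (map \<phi> w))"
    by (rule fa_hom_eq_sum_superset[OF S]) (use keys_add[of p q] in auto)
  also have "\<dots> = (\<Sum>w\<in>?S. fa_const (Poly_Mapping.lookup p w) * prod_list (map \<phi> w))
       + (\<Sum>w\<in>?S. fa_const (Poly_Mapping.lookup q w) * prod_list (map \<phi> w))"
    by (simp add: lookup_add fa_const_eq_single0 single_add distrib_right sum.distrib)
  also have "\<dots> = fa_hom \<phi> p + fa_hom \<phi> q"
    by (simp add: fa_hom_eq_sum_superset[OF S, symmetric])
  finally show ?thesis .
qed

lemma fa_hom_0 [simp]: "fa_hom \<phi> 0 = 0"
  by (simp add: fa_hom_eq)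

lemma fa_hom_uminus: "fa_hom \<phi> (- p) = - fa_hom \<phi> p"
  using fa_hom_add[of \<phi> "- p" p] by (simp add: eq_neg_iff_add_eq_0)

lemma fa_hom_sum: "fa_hom \<phi> (sum f A) = (\<Sum>a\<in>A. fa_hom \<phi> (f a))"
  by (induct A rule: infinite_finite_induct) (simp_all add: fa_hom_add)

lemma fa_hom_single: "fa_hom \<phi> (Poly_Mapping.single v c) = fa_const c * prod_list (map \<phi> v)"
  by (subst fa_hom_eq_sum_superset[of "{v}"]) (auto simp: lookup_single)

lemma fa_hom_mult: "fa_hom \<phi> (p * q) = fa_hom \<phi> p * fa_hom \<phi> q"
proof -
  have "p * q = (\<Sum>v\<in>Poly_Mapping.keys p. \<Sum>w\<in>Poly_Mapping.keys q.
      Poly_Mapping.single (v @ w) (Poly_Mapping.lookup p v * Poly_Mapping.lookup q w))"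
    by (simp add: fa_mult_eq_times[symmetric] fa_mult_def)
  then have "fa_hom \<phi> (p * q) = (\<Sum>v\<in>Poly_Mapping.keys p. \<Sum>w\<in>Poly_Mapping.keys q.
      (fa_const (Poly_Mapping.lookup p v) * prod_list (map \<phi> v))
      * (fa_const (Poly_Mapping.lookup q w) * prod_list (map \<phi> w)))"
    by (simp add: fa_hom_sum fa_hom_single fa_const_mult_mult)
  also have "\<dots> = fa_hom \<phi> p * fa_hom \<phi> q"
    by (simp add: fa_hom_eq sum_distrib_left sum_distrib_right
        sum.swap[of _ "Poly_Mapping.keys q"])
  finally show ?thesis .
qed

lemma fa_hom_const: "fa_hom \<phi> (fa_const c) = fa_const c"
  by (simp add: fa_const_def fa_hom_single)

lemma fa_hom_1 [simp]: "fa_hom \<phi> 1 = 1"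
  using fa_hom_const[of \<phi> 1] by simp

lemma fa_hom_of_int: "fa_hom \<phi> (of_int k) = of_int k"
  using fa_hom_const[of \<phi> "of_int k"] by (simp add: fa_const_of_int)

lemma fa_hom_minus_one_power: "fa_hom \<phi> ((-1) ^ n) = (-1) ^ n"
  by (induct n) (simp_all add: fa_hom_mult fa_hom_uminus)

lemma fa_hom_gen: "fa_hom \<phi> (fa_gen g) = \<phi> g"
  by (simp add: fa_gen_def fa_hom_single)

lemma ideal_gen_mult: "x \<in> ideal_gen R \<Longrightarrow> a * x * b \<in> ideal_gen R"
  using ideal_gen.mult[of x R a b] by (simp add: fa_mult_eq_times)

lemma ideal_gen_uminus: "x \<in> ideal_gen R \<Longrightarrow> - x \<in> ideal_gen R"
  using ideal_gen_mult[of x R "-1" 1] by simp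

lemma ideal_gen_sum: "(\<And>a. a \<in> A \<Longrightarrow> f a \<in> ideal_gen R) \<Longrightarrow> sum f A \<in> ideal_gen R"
  by (induct A rule: infinite_finite_induct) (auto intro: ideal_gen.zero ideal_gen.add)

definition fa_cong :: "'g fa set \<Rightarrow> 'g fa \<Rightarrow> 'g fa \<Rightarrow> bool" where
  "fa_cong R x y \<longleftrightarrow> x - y \<in> ideal_gen R"

lemma fa_cong_refl [simp]: "fa_cong R x x"
  by (simp add: fa_cong_def ideal_gen.zero)

lemma fa_cong_sym: "fa_cong R x y \<Longrightarrow> fa_cong R y x"
  unfolding fa_cong_def using ideal_gen_uminus[of "x - y" R] by simp

lemma fa_cong_trans [trans]: "fa_cong R x y \<Longrightarrow> fa_cong R y z \<Longrightarrow> fa_cong R x z"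
  unfolding fa_cong_def using ideal_gen.add[of "x - y" R "y - z"] by simp

lemma fa_cong_add: "fa_cong R a b \<Longrightarrow> fa_cong R c d \<Longrightarrow> fa_cong R (a + c) (b + d)"
  unfolding fa_cong_def using ideal_gen.add[of "a - b" R "c - d"] by (simp add: algebra_simps)

lemma fa_cong_mult: "fa_cong R a b \<Longrightarrow> fa_cong R (x * a * y) (x * b * y)"
  unfolding fa_cong_def using ideal_gen_mult[of "a - b" R x y] by (simp add: algebra_simps)

lemma fa_cong_mult_left: "fa_cong R a b \<Longrightarrow> fa_cong R (x * a) (x * b)"
  using fa_cong_mult[of R a b x 1] by simp

lemma fa_cong_mult_right: "fa_cong R a b \<Longrightarrow> fa_cong R (a * y) (b * y)"
  using fa_cong_mult[of R a b 1 y] by simp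

lemma fa_cong_mult_both: "fa_cong R a b \<Longrightarrow> fa_cong R c d \<Longrightarrow> fa_cong R (a * c) (b * d)"
  using fa_cong_mult_right[of R a b c] fa_cong_mult_left[of R c d b] fa_cong_trans by blast

lemma fa_cong_sum: "(\<And>i. i \<in> A \<Longrightarrow> fa_cong R (f i) (g i)) \<Longrightarrow> fa_cong R (sum f A) (sum g A)"
  unfolding fa_cong_def using ideal_gen_sum[of A "\<lambda>i. f i - g i" R] by (simp add: sum_subtractf)

section \<open>The parity grading\<close>

definition word_parity :: "(nat \<Rightarrow> int) \<Rightarrow> ygen list \<Rightarrow> nat" where
  "word_parity s w = sum_list (map (gpar s) w)"

lemma word_parity_Nil [simp]: "word_parity s [] = 0"
  by (simp add: word_parity_def)

lemma word_parity_Cons [simp]: "word_parity s (g # w) = gpar s g + word_parity s w"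
  by (simp add: word_parity_def)

lemma word_parity_append [simp]: "word_parity s (v @ w) = word_parity s v + word_parity s w"
  by (simp add: word_parity_def)

text \<open>Only the parity of \<open>e\<close> matters; the natural numbers are not reduced modulo 2.\<close>
definition homogeneous :: "(nat \<Rightarrow> int) \<Rightarrow> nat \<Rightarrow> ygen fa \<Rightarrow> bool" where
  "homogeneous s e x \<longleftrightarrow> (\<forall>w\<in>Poly_Mapping.keys x. even (word_parity s w + e))"

lemma homogeneous_0 [simp]: "homogeneous s e 0"
  by (simp add: homogeneous_def)

lemma homogeneous_add: "homogeneous s e x \<Longrightarrow> homogeneous s e y \<Longrightarrow> homogeneous s e (x + y)"
  unfolding homogeneous_def using keys_add[of x y] by blast

lemma homogeneous_uminus: "homogeneous s e x \<Longrightarrow> homogeneous s e (- x)"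
  unfolding homogeneous_def by (simp add: keys_def)

lemma homogeneous_sum: "(\<And>a. a \<in> A \<Longrightarrow> homogeneous s e (f a)) \<Longrightarrow> homogeneous s e (sum f A)"
  by (induct A rule: infinite_finite_induct) (simp_all add: homogeneous_add)

lemma homogeneous_mult:
  assumes "homogeneous s e x" "homogeneous s f y"
  shows "homogeneous s (e + f) (x * y)"
  unfolding homogeneous_def
proof
  fix w assume "w \<in> Poly_Mapping.keys (x * y)"
  then obtain a b where "w = a + b" "a \<in> Poly_Mapping.keys x" "b \<in> Poly_Mapping.keys y"
    using keys_mult[of x y] by blast
  then show "even (word_parity s w + (e + f))"
    using assms by (auto simp: homogeneous_def plus_list_def)
qed

lemma homogeneous_const: "even e \<Longrightarrow> homogeneous s e (fa_const c)"
  by (simp add: homogeneous_def fa_const_def)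

lemma homogeneous_1: "even e \<Longrightarrow> homogeneous s e 1"
  using homogeneous_const[of e s 1] by simp

lemma homogeneous_minus_one_power: "homogeneous s 0 ((-1) ^ n)"
  using homogeneous_const[of 0 s "(-1) ^ n"] by (simp add: fa_const_power fa_const_uminus)

lemma homogeneous_of_int: "homogeneous s 0 (of_int k)"
  using homogeneous_const[of 0 s "of_int k"] by (simp add: fa_const_of_int)

lemma homogeneous_parity_cong: "homogeneous s e x \<Longrightarrow> even (e + e') \<Longrightarrow> homogeneous s e' x"
  unfolding homogeneous_def by (metis add.assoc even_add)

lemma homogeneous_scale: "homogeneous s 0 c \<Longrightarrow> homogeneous s e x \<Longrightarrow> homogeneous s e (c * x)"
  using homogeneous_mult[of s 0 c e x] by simp

lemma homogeneous_gen: "homogeneous s (gpar s g) (fa_gen g)"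
  by (simp add: homogeneous_def fa_gen_def)

lemma homogeneous_tc: "homogeneous s (par s i + par s j) (tc r i j)"
proof (cases r)
  case 0
  then show ?thesis by (simp add: homogeneous_1)
next
  case (Suc r')
  then show ?thesis using homogeneous_gen[of s "(i, j, Suc r')"] by (simp add: gpar_def)
qed

lemma homogeneous_tc_mult:
  assumes "homogeneous s (par s k + par s j) y"
  shows "homogeneous s (par s i + par s j) (tc p i k * y)"
proof (rule homogeneous_parity_cong)
  show "homogeneous s ((par s i + par s k) + (par s k + par s j)) (tc p i k * y)"
    by (intro homogeneous_mult homogeneous_tc assms)
  show "even (par s i + par s k + (par s k + par s j) + (par s i + par s j))"
    by presburger
qed

lemma homogeneous_tpc: "homogeneous s (par s i + par s j) (tpc \<kappa> r i j)"
proof (induct r arbitrary: i j rule: less_induct)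
  case (less r)
  show ?case
  proof (cases r)
    case 0
    then show ?thesis by (simp add: homogeneous_1)
  next
    case (Suc r')
    then show ?thesis
      by (simp only: tpc.simps fa_mult_eq_times)
        (intro homogeneous_uminus homogeneous_sum homogeneous_tc_mult less; auto)
  qed
qed

lemma homogeneous_bc: "homogeneous s (par s i + par s j) (bc \<kappa> \<epsilon> r i j)"
  unfolding bc_def fa_mult_eq_times fa_const_sgn fa_const_of_int
  by (intro homogeneous_sum homogeneous_scale homogeneous_of_int homogeneous_minus_one_power
      homogeneous_tc_mult homogeneous_tpc)

section \<open>Supercommutation in the tensor product\<close>

abbreviation inl_gen :: "ygen \<Rightarrow> (ygen + ygen) fa" where
  "inl_gen \<equiv> \<lambda>g. fa_gen (Inl g)"

abbreviation inr_gen :: "ygen \<Rightarrow> (ygen + ygen) fa" where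
  "inr_gen \<equiv> \<lambda>g. fa_gen (Inr g)"

lemma gen_supercomm:
  "fa_cong (tens_rels \<kappa> s) (inl_gen g * inr_gen h)
     ((-1) ^ (gpar s g * gpar s h) * (inr_gen h * inl_gen g))"
proof -
  have "fa_gen (Inl g) \<cdot> fa_gen (Inr h)
          - fa_const (sgn (gpar s g * gpar s h)) \<cdot> (fa_gen (Inr h) \<cdot> fa_gen (Inl g))
        \<in> tens_rels \<kappa> s"
    unfolding tens_rels_def by blast
  then show ?thesis
    unfolding fa_cong_def by (auto intro: ideal_gen.gen simp: fa_mult_eq_times fa_const_sgn)
qed

lemma gen_word_supercomm:
  "fa_cong (tens_rels \<kappa> s) (inl_gen g * prod_list (map inr_gen w))
     ((-1) ^ (gpar s g * word_parity s w) * (prod_list (map inr_gen w) * inl_gen g))"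
proof (induct w)
  case Nil
  then show ?case by simp
next
  case (Cons h w)
  let ?R = "tens_rels \<kappa> s" and ?P = "prod_list (map inr_gen w)"
  have "inl_gen g * prod_list (map inr_gen (h # w)) = (inl_gen g * inr_gen h) * ?P"
    by (simp add: mult.assoc)
  also have "fa_cong ?R \<dots> (((-1) ^ (gpar s g * gpar s h) * (inr_gen h * inl_gen g)) * ?P)"
    by (rule fa_cong_mult_right[OF gen_supercomm])
  also have "\<dots> = (-1) ^ (gpar s g * gpar s h) * inr_gen h * (inl_gen g * ?P)"
    by (simp add: mult.assoc)
  also have "fa_cong ?R \<dots> ((-1) ^ (gpar s g * gpar s h) * inr_gen h
      * ((-1) ^ (gpar s g * word_parity s w) * (?P * inl_gen g)))"
    by (rule fa_cong_mult_left[OF Cons])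
  also have "\<dots> = (-1) ^ (gpar s g * word_parity s (h # w))
      * (prod_list (map inr_gen (h # w)) * inl_gen g)"
  proof -
    have "inr_gen h * ((-1) ^ (gpar s g * word_parity s w) * (?P * inl_gen g))
        = (-1) ^ (gpar s g * word_parity s w) * (inr_gen h * (?P * inl_gen g))"
      by (rule mult_minus_one_power_left_commute)
    then show ?thesis by (simp add: mult.assoc distrib_left power_add)
  qed
  finally show ?case .
qed

lemma word_word_supercomm:
  "fa_cong (tens_rels \<kappa> s) (prod_list (map inl_gen v) * prod_list (map inr_gen w))
     ((-1) ^ (word_parity s v * word_parity s w)
      * (prod_list (map inr_gen w) * prod_list (map inl_gen v)))"
proof (induct v)
  case Nil
  then show ?case by simp
next
  case (Cons g v)
  let ?R = "tens_rels \<kappa> s" and ?P = "prod_list (map inl_gen v)"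
    and ?Q = "prod_list (map inr_gen w)" and ?e = "word_parity s v * word_parity s w"
  have "prod_list (map inl_gen (g # v)) * ?Q = inl_gen g * (?P * ?Q)"
    by (simp add: mult.assoc)
  also have "fa_cong ?R \<dots> (inl_gen g * ((-1) ^ ?e * (?Q * ?P)))"
    by (rule fa_cong_mult_left[OF Cons])
  also have "\<dots> = (-1) ^ ?e * (inl_gen g * ?Q) * ?P"
    by (simp only: mult.assoc[symmetric] minus_one_power_commute[of "inl_gen g"])
  also have "fa_cong ?R \<dots>
      ((-1) ^ ?e * ((-1) ^ (gpar s g * word_parity s w) * (?Q * inl_gen g)) * ?P)"
    by (rule fa_cong_mult[OF gen_word_supercomm])
  also have "\<dots> = (-1) ^ (word_parity s (g # v) * word_parity s w)
      * (?Q * prod_list (map inl_gen (g # v)))"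
    by (simp add: minus_one_power_mult_mult mult.assoc distrib_right add.commute)
  finally show ?case .
qed

lemma monomial_supercomm:
  assumes "even (word_parity s v + e)" "even (word_parity s w + f)"
  shows "fa_cong (tens_rels \<kappa> s)
           ((fa_const a * prod_list (map inl_gen v)) * (fa_const b * prod_list (map inr_gen w)))
           ((-1) ^ (e * f)
            * ((fa_const b * prod_list (map inr_gen w)) * (fa_const a * prod_list (map inl_gen v))))"
proof -
  let ?R = "tens_rels \<kappa> s" and ?P = "prod_list (map inl_gen v)"
    and ?Q = "prod_list (map inr_gen w)"
  have "(fa_const a * ?P) * (fa_const b * ?Q) = fa_const (a * b) * (?P * ?Q)"
    by (simp add: fa_const_mult_mult)
  also have "fa_cong ?R \<dots>
      (fa_const (a * b) * ((-1) ^ (word_parity s v * word_parity s w) * (?Q * ?P)))"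
    by (rule fa_cong_mult_left[OF word_word_supercomm])
  also have "\<dots> = (-1) ^ (word_parity s v * word_parity s w) * (fa_const (b * a) * (?Q * ?P))"
    by (simp only: mult_minus_one_power_left_commute mult.commute[of a b])
  also have "\<dots> = (-1) ^ (e * f) * ((fa_const b * ?Q) * (fa_const a * ?P))"
    by (simp add: fa_const_mult_mult minus_one_power_mult_parity[OF assms])
  finally show ?thesis .
qed

lemma iota1_eq: "iota1 x
    = (\<Sum>v\<in>Poly_Mapping.keys x. fa_const (Poly_Mapping.lookup x v) * prod_list (map inl_gen v))"
  by (simp add: iota1_def fa_hom_eq)

lemma iota2_eq: "iota2 x
    = (\<Sum>v\<in>Poly_Mapping.keys x. fa_const (Poly_Mapping.lookup x v) * prod_list (map inr_gen v))"
  by (simp add: iota2_def fa_hom_eq)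

lemma iota1_iota2_supercomm:
  assumes "homogeneous s e x" "homogeneous s f y"
  shows "fa_cong (tens_rels \<kappa> s) (iota1 x * iota2 y) ((-1) ^ (e * f) * (iota2 y * iota1 x))"
proof -
  let ?X = "\<lambda>v. fa_const (Poly_Mapping.lookup x v) * prod_list (map inl_gen v)"
    and ?Y = "\<lambda>w. fa_const (Poly_Mapping.lookup y w) * prod_list (map inr_gen w)"
  have "iota1 x * iota2 y = (\<Sum>v\<in>Poly_Mapping.keys x. \<Sum>w\<in>Poly_Mapping.keys y. ?X v * ?Y w)"
    by (simp add: iota1_eq iota2_eq sum_distrib_left sum_distrib_right
        sum.swap[of _ "Poly_Mapping.keys y"])
  also have "fa_cong (tens_rels \<kappa> s) \<dots>
      (\<Sum>v\<in>Poly_Mapping.keys x. \<Sum>w\<in>Poly_Mapping.keys y. (-1) ^ (e * f) * (?Y w * ?X v))"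
    by (intro fa_cong_sum monomial_supercomm) (use assms in \<open>auto simp: homogeneous_def\<close>)
  also have "\<dots> = (-1) ^ (e * f) * (iota2 y * iota1 x)"
    by (simp add: iota1_eq iota2_eq sum_distrib_left sum_distrib_right
        sum.swap[of _ "Poly_Mapping.keys y"])
  finally show ?thesis .
qed

lemma iota2_iota1_supercomm:
  assumes "homogeneous s e x" "homogeneous s f y"
  shows "fa_cong (tens_rels \<kappa> s) (iota2 y * iota1 x) ((-1) ^ (e * f) * (iota1 x * iota2 y))"
proof -
  have "fa_cong (tens_rels \<kappa> s) ((-1) ^ (e * f) * (iota1 x * iota2 y))
      ((-1) ^ (e * f) * ((-1) ^ (e * f) * (iota2 y * iota1 x)))"
    by (rule fa_cong_mult_left[OF iota1_iota2_supercomm[OF assms]])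
  also have "(-1) ^ (e * f) * ((-1) ^ (e * f) * (iota2 y * iota1 x)) = iota2 y * iota1 x"
    by (simp add: mult.assoc[symmetric] power_add[symmetric])
  finally show ?thesis by (rule fa_cong_sym)
qed

section \<open>Formal power series over free algebras\<close>

unbundle fps_syntax

definition fps_hom :: "('g \<Rightarrow> 'h fa) \<Rightarrow> 'g fa fps \<Rightarrow> 'h fa fps" where
  "fps_hom \<phi> F = Abs_fps (\<lambda>n. fa_hom \<phi> (F $ n))"

lemma fps_hom_nth [simp]: "fps_hom \<phi> F $ n = fa_hom \<phi> (F $ n)"
  by (simp add: fps_hom_def)

lemma fps_hom_1 [simp]: "fps_hom \<phi> 1 = 1"
  by (simp add: fps_eq_iff)

lemma fps_hom_0 [simp]: "fps_hom \<phi> 0 = 0"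
  by (simp add: fps_eq_iff)

lemma fps_hom_sum: "fps_hom \<phi> (sum f A) = (\<Sum>a\<in>A. fps_hom \<phi> (f a))"
  by (simp add: fps_eq_iff fps_sum_nth fa_hom_sum)

lemma fps_hom_mult: "fps_hom \<phi> (F * G) = fps_hom \<phi> F * fps_hom \<phi> G"
  by (simp add: fps_eq_iff fps_mult_nth fa_hom_sum fa_hom_mult)

lemma fps_hom_of_int: "fps_hom \<phi> (of_int e) = of_int e"
  by (simp add: fps_eq_iff fa_hom_of_int flip: fps_of_int)

definition fps_neg_arg :: "'a :: ring_1 fps \<Rightarrow> 'a fps" where
  "fps_neg_arg F = Abs_fps (\<lambda>n. (-1) ^ n * F $ n)"

lemma fps_neg_arg_nth [simp]: "fps_neg_arg F $ n = (-1) ^ n * F $ n"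
  by (simp add: fps_neg_arg_def)

lemma fps_neg_arg_sum: "fps_neg_arg (sum f A) = (\<Sum>a\<in>A. fps_neg_arg (f a))"
  by (simp add: fps_eq_iff fps_sum_nth sum_distrib_left)

lemma fps_neg_arg_mult: "fps_neg_arg (F * G) = fps_neg_arg F * fps_neg_arg G"
proof (rule fps_ext)
  fix n
  have "(-1) ^ n * (F $ i * G $ (n - i)) = (-1) ^ i * F $ i * ((-1) ^ (n - i) * G $ (n - i))"
    if "i \<in> {0..n}" for i
  proof -
    from that have n: "n = i + (n - i)" by auto
    have "(-1) ^ i * F $ i * ((-1) ^ (n - i) * G $ (n - i))
        = (-1) ^ i * ((-1) ^ (n - i) * (F $ i * G $ (n - i)))"
      by (simp only: mult.assoc mult_minus_one_power_left_commute[of "F $ i"])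
    also have "\<dots> = (-1) ^ n * (F $ i * G $ (n - i))"
      by (subst n) (simp only: power_add mult.assoc)
    finally show ?thesis by simp
  qed
  then show "fps_neg_arg (F * G) $ n = (fps_neg_arg F * fps_neg_arg G) $ n"
    by (simp add: fps_mult_nth sum_distrib_left)
qed

lemma fps_hom_neg_arg: "fps_hom \<phi> (fps_neg_arg F) = fps_neg_arg (fps_hom \<phi> F)"
  by (simp add: fps_eq_iff fa_hom_mult fa_hom_minus_one_power)

lemma fps_minus_one_power_mult_nth:
  "(((-1) ^ N :: 'a :: ring_1 fps) * F) $ n = (-1) ^ N * F $ n"
proof -
  have "((-1) ^ N :: 'a fps) = fps_const ((-1) ^ N)"
    by (simp add: minus_one_power_iff flip: fps_const_neg)
  then show ?thesis by simp
qed

lemma fps_of_int_mult_nth: "(of_int e * F) $ n = of_int e * F $ n"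
  by (simp flip: fps_of_int)

definition fps_cong :: "'g fa set \<Rightarrow> 'g fa fps \<Rightarrow> 'g fa fps \<Rightarrow> bool" where
  "fps_cong R F G \<longleftrightarrow> (\<forall>n. fa_cong R (F $ n) (G $ n))"

lemma fps_cong_sum:
  "(\<And>i. i \<in> A \<Longrightarrow> fps_cong R (f i) (g i)) \<Longrightarrow> fps_cong R (sum f A) (sum g A)"
  unfolding fps_cong_def by (simp add: fps_sum_nth fa_cong_sum)

lemma fps_cong_mult_left: "fps_cong R F G \<Longrightarrow> fps_cong R (P * F) (P * G)"
  unfolding fps_cong_def by (simp add: fps_mult_nth fa_cong_sum fa_cong_mult_left)

lemma fps_iota_supercomm:
  assumes "\<And>n. homogeneous s e (X $ n)" "\<And>n. homogeneous s f (Y $ n)"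
  shows "fps_cong (tens_rels \<kappa> s) (fps_hom inr_gen Y * fps_hom inl_gen X)
           ((-1) ^ (e * f) * (fps_hom inl_gen X * fps_hom inr_gen Y))"
  unfolding fps_cong_def
proof
  fix n
  let ?R = "tens_rels \<kappa> s"
  have "(fps_hom inr_gen Y * fps_hom inl_gen X) $ n = (\<Sum>i=0..n. iota2 (Y $ i) * iota1 (X $ (n - i)))"
    by (simp add: fps_mult_nth iota1_def iota2_def)
  also have "fa_cong ?R \<dots> (\<Sum>i=0..n. (-1) ^ (e * f) * (iota1 (X $ (n - i)) * iota2 (Y $ i)))"
    by (intro fa_cong_sum iota2_iota1_supercomm assms)
  also have "\<dots> = (\<Sum>i=0..n. (-1) ^ (e * f) * (iota1 (X $ i) * iota2 (Y $ (n - i))))"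
    by (subst sum.atLeastAtMost_rev) (auto intro!: sum.cong)
  also have "\<dots> = ((-1) ^ (e * f) * (fps_hom inl_gen X * fps_hom inr_gen Y)) $ n"
    by (simp only: fps_minus_one_power_mult_nth)
      (simp add: fps_mult_nth iota1_def iota2_def sum_distrib_left)
  finally show "fa_cong ?R ((fps_hom inr_gen Y * fps_hom inl_gen X) $ n)
      (((-1) ^ (e * f) * (fps_hom inl_gen X * fps_hom inr_gen Y)) $ n)" .
qed

lemma fps_matrix_right_inverse_unique:
  fixes M :: "nat \<Rightarrow> nat \<Rightarrow> 'a :: ring_1 fps" and N1 N2 :: "nat \<Rightarrow> 'a fps"
  assumes M0: "\<And>i k. i < \<kappa> \<Longrightarrow> k < \<kappa> \<Longrightarrow> M i k $ 0 = (if i = k then 1 else 0)"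
    and eq: "\<And>i. i < \<kappa> \<Longrightarrow> (\<Sum>k<\<kappa>. M i k * N1 k) = (\<Sum>k<\<kappa>. M i k * N2 k)"
    and i: "i < \<kappa>"
  shows "N1 i = N2 i"
proof -
  have "\<forall>i<\<kappa>. N1 i $ n = N2 i $ n" for n
  proof (induct n rule: less_induct)
    case (less n)
    show ?case
    proof (intro allI impI)
      fix i assume i: "i < \<kappa>"
      have split: "(\<Sum>k<\<kappa>. M i k * N k) $ n
          = N i $ n + (\<Sum>k<\<kappa>. \<Sum>p\<in>{1..n}. M i k $ p * N k $ (n - p))" for N :: "nat \<Rightarrow> 'a fps"
      proof -
        have "(\<Sum>k<\<kappa>. M i k * N k) $ n
            = (\<Sum>k<\<kappa>. M i k $ 0 * N k $ n + (\<Sum>p\<in>{1..n}. M i k $ p * N k $ (n - p)))"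
          by (simp add: fps_sum_nth fps_mult_nth sum.atLeast_Suc_atMost)
        also have "\<dots> = N i $ n + (\<Sum>k<\<kappa>. \<Sum>p\<in>{1..n}. M i k $ p * N k $ (n - p))"
          using i by (simp add: sum.distrib M0 if_distrib[of "\<lambda>x. x * _"] cong: if_cong)
        finally show ?thesis .
      qed
      have "(\<Sum>k<\<kappa>. \<Sum>p\<in>{1..n}. M i k $ p * N1 k $ (n - p))
          = (\<Sum>k<\<kappa>. \<Sum>p\<in>{1..n}. M i k $ p * N2 k $ (n - p))"
        using less by (intro sum.cong refl) auto
      then show "N1 i $ n = N2 i $ n"
        using split[of N1] split[of N2] eq[OF i] by simp
    qed
  qed
  then show ?thesis using i by (simp add: fps_eq_iff)
qed

lemma sum_swap_outer_inner:
  "(\<Sum>a\<in>A. \<Sum>b\<in>B. \<Sum>c\<in>C. f a b c) = (\<Sum>c\<in>C. \<Sum>b\<in>B. \<Sum>a\<in>A. f a b c)"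
proof -
  have "(\<Sum>a\<in>A. \<Sum>b\<in>B. \<Sum>c\<in>C. f a b c) = (\<Sum>a\<in>A. \<Sum>c\<in>C. \<Sum>b\<in>B. f a b c)"
    by (intro sum.cong refl) (rule sum.swap)
  also have "\<dots> = (\<Sum>c\<in>C. \<Sum>a\<in>A. \<Sum>b\<in>B. f a b c)"
    by (rule sum.swap)
  also have "\<dots> = (\<Sum>c\<in>C. \<Sum>b\<in>B. \<Sum>a\<in>A. f a b c)"
    by (intro sum.cong refl) (rule sum.swap)
  finally show ?thesis .
qed

text \<open>The coefficient of X^r in each series is the coefficient of u^-r in the paper.\<close>

definition T_fps :: "nat \<Rightarrow> nat \<Rightarrow> ygen fa fps" where
  "T_fps i j = Abs_fps (\<lambda>r. tc r i j)"

definition T_inv_fps :: "nat \<Rightarrow> nat \<Rightarrow> nat \<Rightarrow> ygen fa fps" where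
  "T_inv_fps \<kappa> i j = Abs_fps (\<lambda>r. tpc \<kappa> r i j)"

definition B_fps :: "nat \<Rightarrow> (nat \<Rightarrow> int) \<Rightarrow> nat \<Rightarrow> nat \<Rightarrow> ygen fa fps" where
  "B_fps \<kappa> \<epsilon> i j = (\<Sum>a<\<kappa>. of_int (\<epsilon> a) * (T_fps i a * fps_neg_arg (T_inv_fps \<kappa> a j)))"

lemma T_fps_nth [simp]: "T_fps i j $ r = tc r i j"
  by (simp add: T_fps_def)

lemma T_inv_fps_nth [simp]: "T_inv_fps \<kappa> i j $ r = tpc \<kappa> r i j"
  by (simp add: T_inv_fps_def)

lemma B_fps_nth: "B_fps \<kappa> \<epsilon> i j $ r = bc \<kappa> \<epsilon> r i j"
  unfolding B_fps_def fps_sum_nth fps_of_int_mult_nth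
  by (simp add: bc_def fps_mult_nth fa_mult_eq_times fa_const_sgn fa_const_of_int
      atLeast0AtMost mult_minus_one_power_left_commute)

lemma T_fps_mult_T_inv_fps:
  assumes "i < \<kappa>"
  shows "(\<Sum>k<\<kappa>. T_fps i k * T_inv_fps \<kappa> k j) = (if i = j then 1 else 0)"
proof (rule fps_ext)
  fix n
  show "(\<Sum>k<\<kappa>. T_fps i k * T_inv_fps \<kappa> k j) $ n = (if i = j then 1 else 0 :: ygen fa fps) $ n"
  proof (cases n)
    case 0
    then show ?thesis
      using assms by (simp add: fps_sum_nth if_distrib[of "\<lambda>x. x * _"] cong: if_cong)
  next
    case (Suc r)
    have "(\<Sum>k<\<kappa>. T_fps i k * T_inv_fps \<kappa> k j) $ n
        = (\<Sum>k<\<kappa>. \<Sum>p=0..Suc r. tc p i k * tpc \<kappa> (Suc r - p) k j)"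
      by (simp only: Suc fps_sum_nth fps_mult_nth T_fps_nth T_inv_fps_nth)
    also have "\<dots> = (\<Sum>k<\<kappa>. tc 0 i k * tpc \<kappa> (Suc r) k j)
        + (\<Sum>k<\<kappa>. \<Sum>p\<in>{1..Suc r}. tc p i k * tpc \<kappa> (Suc r - p) k j)"
      by (simp only: sum.atLeast_Suc_atMost[OF le0] diff_zero One_nat_def sum.distrib)
    also have "(\<Sum>k<\<kappa>. tc 0 i k * tpc \<kappa> (Suc r) k j) = tpc \<kappa> (Suc r) i j"
      using assms by (simp del: tpc.simps add: if_distrib[of "\<lambda>x. x * _"] cong: if_cong)
    also have "(\<Sum>k<\<kappa>. \<Sum>p\<in>{1..Suc r}. tc p i k * tpc \<kappa> (Suc r - p) k j)
        = (\<Sum>p\<in>{1..Suc r}. \<Sum>k<\<kappa>. tc p i k * tpc \<kappa> (Suc r - p) k j)"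
      by (rule sum.swap)
    also have "tpc \<kappa> (Suc r) i j
        = - (\<Sum>p\<in>{1..Suc r}. \<Sum>k<\<kappa>. tc p i k * tpc \<kappa> (Suc r - p) k j)"
      by (simp only: tpc.simps fa_mult_eq_times)
    finally show ?thesis by (simp add: Suc)
  qed
qed

lemma fps_hom_T_fps_mult_T_inv_fps:
  assumes "i < \<kappa>"
  shows "(\<Sum>k<\<kappa>. fps_hom \<phi> (T_fps i k) * fps_hom \<phi> (T_inv_fps \<kappa> k j)) = (if i = j then 1 else 0)"
proof -
  have "(\<Sum>k<\<kappa>. fps_hom \<phi> (T_fps i k) * fps_hom \<phi> (T_inv_fps \<kappa> k j))
      = fps_hom \<phi> (\<Sum>k<\<kappa>. T_fps i k * T_inv_fps \<kappa> k j)"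
    by (simp add: fps_hom_sum fps_hom_mult)
  then show ?thesis using T_fps_mult_T_inv_fps[OF assms] by simp
qed

lemma Delta_T_fps:
  assumes "i < \<kappa>"
  shows "fps_hom (delta_gen \<kappa>) (T_fps i j)
    = (\<Sum>k<\<kappa>. fps_hom inl_gen (T_fps i k) * fps_hom inr_gen (T_fps k j))"
proof (rule fps_ext)
  fix n
  show "fps_hom (delta_gen \<kappa>) (T_fps i j) $ n
      = (\<Sum>k<\<kappa>. fps_hom inl_gen (T_fps i k) * fps_hom inr_gen (T_fps k j)) $ n"
  proof (cases n)
    case 0
    then show ?thesis
      using assms by (simp add: fps_sum_nth if_distrib[of "\<lambda>x. x * _"]
          if_distrib[of "fa_hom inl_gen"] if_distrib[of "fa_hom inr_gen"] cong: if_cong)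
  next
    case (Suc r)
    then show ?thesis
      by (simp add: fps_sum_nth fps_mult_nth fa_hom_gen delta_gen_def fa_mult_eq_times
          iota1_def iota2_def atLeast0AtMost sum.swap[of _ "{..<\<kappa>}"])
  qed
qed

lemma Delta_T_fps_mult_coprod_T_inv_fps:
  assumes "i < \<kappa>"
  shows "(\<Sum>k<\<kappa>. fps_hom (delta_gen \<kappa>) (T_fps i k)
            * (\<Sum>l<\<kappa>. fps_hom inr_gen (T_inv_fps \<kappa> k l) * fps_hom inl_gen (T_inv_fps \<kappa> l j)))
    = (if i = j then 1 else 0)"
proof -
  let ?A1 = "\<lambda>i k. fps_hom inl_gen (T_fps i k)" and ?A2 = "\<lambda>i k. fps_hom inr_gen (T_fps i k)"
  let ?B1 = "\<lambda>i k. fps_hom inl_gen (T_inv_fps \<kappa> i k)"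
    and ?B2 = "\<lambda>i k. fps_hom inr_gen (T_inv_fps \<kappa> i k)"
  have "(\<Sum>k<\<kappa>. fps_hom (delta_gen \<kappa>) (T_fps i k) * (\<Sum>l<\<kappa>. ?B2 k l * ?B1 l j))
      = (\<Sum>k<\<kappa>. (\<Sum>k'<\<kappa>. ?A1 i k' * ?A2 k' k) * (\<Sum>l<\<kappa>. ?B2 k l * ?B1 l j))"
    by (simp add: Delta_T_fps[OF assms])
  also have "\<dots> = (\<Sum>k<\<kappa>. \<Sum>l<\<kappa>. \<Sum>k'<\<kappa>. ?A1 i k' * (?A2 k' k * (?B2 k l * ?B1 l j)))"
    by (simp add: sum_distrib_left sum_distrib_right mult.assoc)
  also have "\<dots> = (\<Sum>k'<\<kappa>. \<Sum>l<\<kappa>. \<Sum>k<\<kappa>. ?A1 i k' * (?A2 k' k * (?B2 k l * ?B1 l j)))"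
    by (rule sum_swap_outer_inner)
  also have "\<dots> = (\<Sum>k'<\<kappa>. \<Sum>l<\<kappa>. ?A1 i k' * (\<Sum>k<\<kappa>. ?A2 k' k * ?B2 k l) * ?B1 l j)"
    by (simp add: sum_distrib_left sum_distrib_right mult.assoc)
  also have "\<dots> = (\<Sum>k'<\<kappa>. \<Sum>l<\<kappa>. ?A1 i k' * (if k' = l then 1 else 0) * ?B1 l j)"
    by (intro sum.cong refl) (simp add: fps_hom_T_fps_mult_T_inv_fps)
  also have "\<dots> = (\<Sum>k'<\<kappa>. ?A1 i k' * ?B1 k' j)"
    by (simp add: if_distrib[of "\<lambda>x. _ * x"] if_distrib[of "\<lambda>x. x * _"] cong: if_cong)
  also have "\<dots> = (if i = j then 1 else 0)"
    by (rule fps_hom_T_fps_mult_T_inv_fps[OF assms])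
  finally show ?thesis .
qed

lemma Delta_T_inv_fps:
  assumes "i < \<kappa>"
  shows "fps_hom (delta_gen \<kappa>) (T_inv_fps \<kappa> i j)
    = (\<Sum>l<\<kappa>. fps_hom inr_gen (T_inv_fps \<kappa> i l) * fps_hom inl_gen (T_inv_fps \<kappa> l j))"
proof (rule fps_matrix_right_inverse_unique[OF _ _ assms])
  show "fps_hom (delta_gen \<kappa>) (T_fps i k) $ 0 = (if i = k then 1 else 0)" for i k
    by simp
  show "(\<Sum>k<\<kappa>. fps_hom (delta_gen \<kappa>) (T_fps i k) * fps_hom (delta_gen \<kappa>) (T_inv_fps \<kappa> k j))
      = (\<Sum>k<\<kappa>. fps_hom (delta_gen \<kappa>) (T_fps i k)
          * (\<Sum>l<\<kappa>. fps_hom inr_gen (T_inv_fps \<kappa> k l) * fps_hom inl_gen (T_inv_fps \<kappa> l j)))"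
    if "i < \<kappa>" for i
    using that by (simp only: fps_hom_T_fps_mult_T_inv_fps Delta_T_fps_mult_coprod_T_inv_fps)
qed

lemma homogeneous_B_fps_nth: "homogeneous s (par s i + par s j) (B_fps \<kappa> \<epsilon> i j $ n)"
  by (simp add: B_fps_nth homogeneous_bc)

lemma homogeneous_T_inv_neg_nth:
  "homogeneous s (par s i + par s j) (fps_neg_arg (T_inv_fps \<kappa> i j) $ n)"
  by (simp add: homogeneous_scale homogeneous_minus_one_power homogeneous_tpc)

lemma Delta_T_inv_neg_fps:
  assumes "i < \<kappa>"
  shows "fps_hom (delta_gen \<kappa>) (fps_neg_arg (T_inv_fps \<kappa> i j))
    = (\<Sum>l<\<kappa>. fps_hom inr_gen (fps_neg_arg (T_inv_fps \<kappa> i l))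
              * fps_hom inl_gen (fps_neg_arg (T_inv_fps \<kappa> l j)))"
  by (simp add: fps_hom_neg_arg Delta_T_inv_fps[OF assms] fps_neg_arg_sum fps_neg_arg_mult)

lemma mult_of_int_left_commute: "x * (of_int e * y) = (of_int e :: 'a :: ring_1) * (x * y)"
proof -
  have "x * (of_int e * y) = (x * of_int e) * y"
    by (simp only: mult.assoc)
  then show ?thesis
    by (simp only: mult_of_int_commute[symmetric] mult.assoc)
qed

lemma Delta_B_fps_eq:
  assumes "i < \<kappa>"
  shows "fps_hom (delta_gen \<kappa>) (B_fps \<kappa> \<epsilon> i j)
    = (\<Sum>k<\<kappa>. \<Sum>l<\<kappa>. fps_hom inl_gen (T_fps i k)
        * (fps_hom inr_gen (B_fps \<kappa> \<epsilon> k l) * fps_hom inl_gen (fps_neg_arg (T_inv_fps \<kappa> l j))))"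
proof -
  let ?A1 = "\<lambda>i k. fps_hom inl_gen (T_fps i k)" and ?A2 = "\<lambda>i k. fps_hom inr_gen (T_fps i k)"
  let ?B1 = "\<lambda>i k. fps_hom inl_gen (fps_neg_arg (T_inv_fps \<kappa> i k))"
    and ?B2 = "\<lambda>i k. fps_hom inr_gen (fps_neg_arg (T_inv_fps \<kappa> i k))"
  have "fps_hom (delta_gen \<kappa>) (B_fps \<kappa> \<epsilon> i j)
      = (\<Sum>a<\<kappa>. of_int (\<epsilon> a) * ((\<Sum>k<\<kappa>. ?A1 i k * ?A2 k a) * (\<Sum>l<\<kappa>. ?B2 a l * ?B1 l j)))"
    by (simp add: B_fps_def fps_hom_sum fps_hom_mult fps_hom_of_int Delta_T_fps[OF assms]
        Delta_T_inv_neg_fps)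
  also have "\<dots> = (\<Sum>a<\<kappa>. \<Sum>l<\<kappa>. \<Sum>k<\<kappa>. of_int (\<epsilon> a) * (?A1 i k * (?A2 k a * (?B2 a l * ?B1 l j))))"
    by (simp add: sum_distrib_left sum_distrib_right mult.assoc)
  also have "\<dots> = (\<Sum>k<\<kappa>. \<Sum>l<\<kappa>. \<Sum>a<\<kappa>. of_int (\<epsilon> a) * (?A1 i k * (?A2 k a * (?B2 a l * ?B1 l j))))"
    by (rule sum_swap_outer_inner)
  also have "\<dots> = (\<Sum>k<\<kappa>. \<Sum>l<\<kappa>. ?A1 i k * (fps_hom inr_gen (B_fps \<kappa> \<epsilon> k l) * ?B1 l j))"
    by (simp add: B_fps_def fps_hom_sum fps_hom_mult fps_hom_of_int sum_distrib_left
        sum_distrib_right mult.assoc mult_of_int_left_commute)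
  finally show ?thesis .
qed

lemma Delta_B_fps_cong:
  assumes "i < \<kappa>"
  shows "fps_cong (tens_rels \<kappa> s) (fps_hom (delta_gen \<kappa>) (B_fps \<kappa> \<epsilon> i j))
    (\<Sum>k<\<kappa>. \<Sum>l<\<kappa>. (-1) ^ ((par s l + par s j) * (par s k + par s l))
        * (fps_hom inl_gen (T_fps i k * fps_neg_arg (T_inv_fps \<kappa> l j))
           * fps_hom inr_gen (B_fps \<kappa> \<epsilon> k l)))"
proof -
  have "fps_cong (tens_rels \<kappa> s) (fps_hom (delta_gen \<kappa>) (B_fps \<kappa> \<epsilon> i j))
    (\<Sum>k<\<kappa>. \<Sum>l<\<kappa>. fps_hom inl_gen (T_fps i k)
        * ((-1) ^ ((par s l + par s j) * (par s k + par s l))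
           * (fps_hom inl_gen (fps_neg_arg (T_inv_fps \<kappa> l j)) * fps_hom inr_gen (B_fps \<kappa> \<epsilon> k l))))"
    unfolding Delta_B_fps_eq[OF assms]
    by (intro fps_cong_sum fps_cong_mult_left fps_iota_supercomm homogeneous_T_inv_neg_nth
        homogeneous_B_fps_nth)
  then show ?thesis
    by (simp add: fps_hom_mult mult_minus_one_power_left_commute mult.assoc)
qed

lemma sum_triangle_reindex:
  fixes g :: "nat \<Rightarrow> nat \<Rightarrow> nat \<Rightarrow> 'a :: comm_monoid_add"
  shows "(\<Sum>n=0..r. \<Sum>p=0..n. g p (n - p) (r - n)) = (\<Sum>p\<le>r. \<Sum>q\<le>r - p. g p q (r - p - q))"
proof -
  have "(\<Sum>p\<le>r. \<Sum>q\<le>r - p. g p q (r - p - q))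
      = (\<Sum>(p, q)\<in>Sigma {..r} (\<lambda>p. {..r - p}). g p q (r - p - q))"
    by (rule sum.Sigma) auto
  also have "Sigma {..r} (\<lambda>p. {..r - p}) = {(p, q). p + q \<le> r}"
    by auto
  also have "(\<Sum>(p, q)\<in>{(p, q). p + q \<le> r}. g p q (r - p - q))
      = (\<Sum>n\<le>r. \<Sum>p\<le>n. g p (n - p) (r - p - (n - p)))"
    by (rule sum.triangle_reindex_eq)
  also have "\<dots> = (\<Sum>n=0..r. \<Sum>p=0..n. g p (n - p) (r - n))"
    by (simp add: atLeast0AtMost)
  finally show ?thesis by simp
qed

lemma Delta_B_term_nth:
  "(fps_hom inl_gen (T_fps i k * fps_neg_arg (T_inv_fps \<kappa> l j)) * fps_hom inr_gen (B_fps \<kappa> \<epsilon> k l)) $ r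
   = (\<Sum>p\<le>r. \<Sum>q\<le>r - p. (-1) ^ q * (iota1 (tc p i k * tpc \<kappa> q l j) * iota2 (bc \<kappa> \<epsilon> (r - p - q) k l)))"
proof -
  have "(fps_hom inl_gen (T_fps i k * fps_neg_arg (T_inv_fps \<kappa> l j))
        * fps_hom inr_gen (B_fps \<kappa> \<epsilon> k l)) $ r
      = (\<Sum>n=0..r. \<Sum>p=0..n. (-1) ^ (n - p)
          * (iota1 (tc p i k * tpc \<kappa> (n - p) l j) * iota2 (bc \<kappa> \<epsilon> (r - n) k l)))"
    by (simp add: fps_mult_nth B_fps_nth fa_hom_sum fa_hom_mult fa_hom_minus_one_power
        sum_distrib_right mult_minus_one_power_left_commute mult.assoc iota1_def iota2_def)
  also have "\<dots> = (\<Sum>p\<le>r. \<Sum>q\<le>r - p.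
      (-1) ^ q * (iota1 (tc p i k * tpc \<kappa> q l j) * iota2 (bc \<kappa> \<epsilon> (r - p - q) k l)))"
    by (rule sum_triangle_reindex)
  finally show ?thesis .
qed

lemma Delta_bc:
  assumes "i < \<kappa>"
  shows "Delta \<kappa> (bc \<kappa> \<epsilon> r i j)
            - (\<Sum>a<\<kappa>. \<Sum>c<\<kappa>.
                 fa_const (sgn ((par s c + par s j) * (par s a + par s c))) \<cdot>
                 (\<Sum>p\<le>r. \<Sum>q\<le>r - p.
                    fa_const (sgn q) \<cdot> (iota1 (tc p i a \<cdot> tpc \<kappa> q c j)
                      \<cdot> iota2 (bc \<kappa> \<epsilon> (r - p - q) a c))))
            \<in> tens_ideal \<kappa> s"
proof -
  have "Delta \<kappa> (bc \<kappa> \<epsilon> r i j) = fps_hom (delta_gen \<kappa>) (B_fps \<kappa> \<epsilon> i j) $ r"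
    by (simp add: B_fps_nth Delta_def)
  with Delta_B_fps_cong[OF assms, of s \<epsilon> j] show ?thesis
    by (simp only: fps_cong_def fps_sum_nth fps_minus_one_power_mult_nth Delta_B_term_nth
        fa_mult_eq_times fa_const_sgn fa_cong_def tens_ideal_def)
qed

section \<open>The coideal property\<close>

lemma subalg_gen_0: "0 \<in> subalg_gen S"
  using subalg_gen.const[of 0 S] by simp

lemma subalg_gen_1: "1 \<in> subalg_gen S"
  using subalg_gen.const[of 1 S] by simp

lemma subalg_gen_sum: "(\<And>a. a \<in> A \<Longrightarrow> f a \<in> subalg_gen S) \<Longrightarrow> sum f A \<in> subalg_gen S"
  by (induct A rule: infinite_finite_induct) (simp_all add: subalg_gen_0 subalg_gen.add)

lemma bc_in_twisted_subalg:
  assumes "a < \<kappa>" "c < \<kappa>"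
  shows "bc \<kappa> \<epsilon> r a c \<in> twisted_subalg \<kappa> \<epsilon>"
proof (cases r)
  case 0
  then show ?thesis
    unfolding twisted_subalg_def bc_def
    by (intro subalg_gen_sum subalg_gen.mult subalg_gen.const) (simp_all add: subalg_gen_0 subalg_gen_1)
next
  case (Suc r')
  then show ?thesis
    using assms unfolding twisted_subalg_def by (intro subalg_gen.gen) auto
qed

text \<open>Elements of Y \<otimes> B. Homogeneity of the tensor factors is carried along so that products
  of such sums can be reordered with the supercommutation relations.\<close>
definition in_Y_tensor_B :: "nat \<Rightarrow> (nat \<Rightarrow> int) \<Rightarrow> (nat \<Rightarrow> int) \<Rightarrow> (ygen + ygen) fa \<Rightarrow> bool" where
  "in_Y_tensor_B \<kappa> \<epsilon> s x \<longleftrightarrow> (\<exists>ps.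
     (\<forall>(y, z) \<in> set ps. z \<in> twisted_subalg \<kappa> \<epsilon> \<and> (\<exists>e. homogeneous s e y) \<and> (\<exists>f. homogeneous s f z))
     \<and> fa_cong (tens_rels \<kappa> s) x (\<Sum>(y, z) \<leftarrow> ps. iota1 y * iota2 z))"

lemma in_Y_tensor_B_0: "in_Y_tensor_B \<kappa> \<epsilon> s 0"
  unfolding in_Y_tensor_B_def by (rule exI[of _ "[]"]) simp

lemma in_Y_tensor_B_cong:
  "fa_cong (tens_rels \<kappa> s) x x' \<Longrightarrow> in_Y_tensor_B \<kappa> \<epsilon> s x' \<Longrightarrow> in_Y_tensor_B \<kappa> \<epsilon> s x"
  unfolding in_Y_tensor_B_def using fa_cong_trans by blast

lemma in_Y_tensor_B_add:
  assumes "in_Y_tensor_B \<kappa> \<epsilon> s x" "in_Y_tensor_B \<kappa> \<epsilon> s x'"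
  shows "in_Y_tensor_B \<kappa> \<epsilon> s (x + x')"
proof -
  from assms obtain ps ps' where
    "\<forall>(y, z) \<in> set ps. z \<in> twisted_subalg \<kappa> \<epsilon> \<and> (\<exists>e. homogeneous s e y) \<and> (\<exists>f. homogeneous s f z)"
    "fa_cong (tens_rels \<kappa> s) x (\<Sum>(y, z) \<leftarrow> ps. iota1 y * iota2 z)"
    "\<forall>(y, z) \<in> set ps'. z \<in> twisted_subalg \<kappa> \<epsilon> \<and> (\<exists>e. homogeneous s e y) \<and> (\<exists>f. homogeneous s f z)"
    "fa_cong (tens_rels \<kappa> s) x' (\<Sum>(y, z) \<leftarrow> ps'. iota1 y * iota2 z)"
    unfolding in_Y_tensor_B_def by blast
  then show ?thesis
    unfolding in_Y_tensor_B_def by (intro exI[of _ "ps @ ps'"]) (auto intro: fa_cong_add)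
qed

lemma in_Y_tensor_B_sum:
  "(\<And>a. a \<in> A \<Longrightarrow> in_Y_tensor_B \<kappa> \<epsilon> s (f a)) \<Longrightarrow> in_Y_tensor_B \<kappa> \<epsilon> s (sum f A)"
  by (induct A rule: infinite_finite_induct) (simp_all add: in_Y_tensor_B_0 in_Y_tensor_B_add)

lemma in_Y_tensor_B_sum_list:
  "(\<And>a. a \<in> set xs \<Longrightarrow> in_Y_tensor_B \<kappa> \<epsilon> s (f a)) \<Longrightarrow> in_Y_tensor_B \<kappa> \<epsilon> s (\<Sum>a \<leftarrow> xs. f a)"
  by (induct xs) (simp_all add: in_Y_tensor_B_0 in_Y_tensor_B_add)

lemma in_Y_tensor_B_tensor:
  "z \<in> twisted_subalg \<kappa> \<epsilon> \<Longrightarrow> homogeneous s e y \<Longrightarrow> homogeneous s f z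
    \<Longrightarrow> in_Y_tensor_B \<kappa> \<epsilon> s (iota1 y * iota2 z)"
  unfolding in_Y_tensor_B_def by (intro exI[of _ "[(y, z)]"]) auto

lemma in_Y_tensor_B_tensor_mult:
  assumes "z \<in> twisted_subalg \<kappa> \<epsilon>" "homogeneous s e y" "homogeneous s f z"
    and "z' \<in> twisted_subalg \<kappa> \<epsilon>" "homogeneous s e' y'" "homogeneous s f' z'"
  shows "in_Y_tensor_B \<kappa> \<epsilon> s ((iota1 y * iota2 z) * (iota1 y' * iota2 z'))"
proof (rule in_Y_tensor_B_cong)
  let ?R = "tens_rels \<kappa> s"
  have "(iota1 y * iota2 z) * (iota1 y' * iota2 z') = iota1 y * (iota2 z * iota1 y') * iota2 z'"
    by (simp add: mult.assoc)
  also have "fa_cong ?R \<dots> (iota1 y * ((-1) ^ (e' * f) * (iota1 y' * iota2 z)) * iota2 z')"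
    by (rule fa_cong_mult[OF iota2_iota1_supercomm[OF assms(5) assms(3)]])
  also have "\<dots> = iota1 ((-1) ^ (e' * f) * (y * y')) * iota2 (z * z')"
    by (simp add: iota1_def iota2_def fa_hom_mult fa_hom_minus_one_power
        mult_minus_one_power_left_commute mult.assoc)
  finally show "fa_cong ?R ((iota1 y * iota2 z) * (iota1 y' * iota2 z'))
      (iota1 ((-1) ^ (e' * f) * (y * y')) * iota2 (z * z'))" .
  have "z * z' \<in> twisted_subalg \<kappa> \<epsilon>"
    using subalg_gen.mult[of z _ z'] assms(1,4) by (simp add: twisted_subalg_def fa_mult_eq_times)
  then show "in_Y_tensor_B \<kappa> \<epsilon> s (iota1 ((-1) ^ (e' * f) * (y * y')) * iota2 (z * z'))"
    by (intro in_Y_tensor_B_tensor[where e = "e + e'" and f = "f + f'"] homogeneous_scale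
        homogeneous_minus_one_power homogeneous_mult assms)
qed

lemma in_Y_tensor_B_mult:
  assumes "in_Y_tensor_B \<kappa> \<epsilon> s x" "in_Y_tensor_B \<kappa> \<epsilon> s x'"
  shows "in_Y_tensor_B \<kappa> \<epsilon> s (x * x')"
proof -
  from assms obtain ps ps' where
    ps: "\<forall>(y, z) \<in> set ps. z \<in> twisted_subalg \<kappa> \<epsilon> \<and> (\<exists>e. homogeneous s e y) \<and> (\<exists>f. homogeneous s f z)"
    "fa_cong (tens_rels \<kappa> s) x (\<Sum>(y, z) \<leftarrow> ps. iota1 y * iota2 z)" and
    ps': "\<forall>(y, z) \<in> set ps'. z \<in> twisted_subalg \<kappa> \<epsilon> \<and> (\<exists>e. homogeneous s e y) \<and> (\<exists>f. homogeneous s f z)"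
    "fa_cong (tens_rels \<kappa> s) x' (\<Sum>(y, z) \<leftarrow> ps'. iota1 y * iota2 z)"
    unfolding in_Y_tensor_B_def by blast
  have "in_Y_tensor_B \<kappa> \<epsilon> s
      ((\<Sum>(y, z) \<leftarrow> ps. iota1 y * iota2 z) * (\<Sum>(y, z) \<leftarrow> ps'. iota1 y * iota2 z))"
    unfolding sum_list_mult_const[symmetric]
  proof (rule in_Y_tensor_B_sum_list)
    fix p assume p: "p \<in> set ps"
    obtain y z where yz: "p = (y, z)"
      by (cases p)
    have "in_Y_tensor_B \<kappa> \<epsilon> s ((iota1 y * iota2 z) * (\<Sum>(y', z') \<leftarrow> ps'. iota1 y' * iota2 z'))"
      unfolding sum_list_const_mult[symmetric]
    proof (rule in_Y_tensor_B_sum_list)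
      fix p' assume p': "p' \<in> set ps'"
      obtain y' z' where yz': "p' = (y', z')"
        by (cases p')
      show "in_Y_tensor_B \<kappa> \<epsilon> s ((iota1 y * iota2 z) * (case p' of (y', z') \<Rightarrow> iota1 y' * iota2 z'))"
      proof -
        from ps(1) p obtain e f where "z \<in> twisted_subalg \<kappa> \<epsilon>" "homogeneous s e y" "homogeneous s f z"
          unfolding yz by auto
        moreover from ps'(1) p' obtain e' f'
          where "z' \<in> twisted_subalg \<kappa> \<epsilon>" "homogeneous s e' y'" "homogeneous s f' z'"
          unfolding yz' by auto
        ultimately show ?thesis
          unfolding yz' by (simp add: in_Y_tensor_B_tensor_mult)
      qed
    qed
    then show "in_Y_tensor_B \<kappa> \<epsilon> s
        ((case p of (y, z) \<Rightarrow> iota1 y * iota2 z) * (\<Sum>(y, z) \<leftarrow> ps'. iota1 y * iota2 z))"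
      by (simp add: yz)
  qed
  then show ?thesis
    using ps(2) ps'(2) fa_cong_mult_both in_Y_tensor_B_cong by blast
qed

lemma Delta_twisted_subalg:
  assumes "x \<in> twisted_subalg \<kappa> \<epsilon>"
  shows "in_Y_tensor_B \<kappa> \<epsilon> s (Delta \<kappa> x)"
  using assms unfolding twisted_subalg_def
proof (induct x rule: subalg_gen.induct)
  case (gen x)
  then obtain r i j where x: "x = bc \<kappa> \<epsilon> r i j" and ij: "i < \<kappa>" "j < \<kappa>"
    by blast
  have "in_Y_tensor_B \<kappa> \<epsilon> s ((-1) ^ N * ((-1) ^ q * (iota1 (tc p i a * tpc \<kappa> q c j)
      * iota2 (bc \<kappa> \<epsilon> (r - p - q) a c))))" if "a < \<kappa>" "c < \<kappa>" for a c p q N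
  proof -
    have "(-1) ^ N * ((-1) ^ q * (iota1 (tc p i a * tpc \<kappa> q c j) * iota2 (bc \<kappa> \<epsilon> (r - p - q) a c)))
      = iota1 ((-1) ^ (N + q) * (tc p i a * tpc \<kappa> q c j)) * iota2 (bc \<kappa> \<epsilon> (r - p - q) a c)"
      by (simp add: iota1_def fa_hom_mult fa_hom_minus_one_power power_add mult.assoc)
    then show ?thesis
      using that by (simp only:) (intro in_Y_tensor_B_tensor[OF bc_in_twisted_subalg
          homogeneous_scale[OF homogeneous_minus_one_power homogeneous_mult[OF homogeneous_tc
          homogeneous_tpc]] homogeneous_bc])
  qed
  then have "in_Y_tensor_B \<kappa> \<epsilon> s (\<Sum>a<\<kappa>. \<Sum>c<\<kappa>.
                 fa_const (sgn ((par s c + par s j) * (par s a + par s c))) \<cdot>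
                 (\<Sum>p\<le>r. \<Sum>q\<le>r - p.
                    fa_const (sgn q) \<cdot> (iota1 (tc p i a \<cdot> tpc \<kappa> q c j)
                      \<cdot> iota2 (bc \<kappa> \<epsilon> (r - p - q) a c))))"
    unfolding fa_mult_eq_times fa_const_sgn sum_distrib_left
    by (intro in_Y_tensor_B_sum) simp
  moreover note Delta_bc[OF ij(1), of \<epsilon> r j s]
  ultimately show ?case
    unfolding x fa_cong_def tens_ideal_def by (rule in_Y_tensor_B_cong[unfolded fa_cong_def, rotated])
next
  case (const c)
  have "Delta \<kappa> (fa_const c) = iota1 (fa_const c) * iota2 1"
    by (simp add: Delta_def iota1_def iota2_def fa_hom_const)
  moreover have "1 \<in> twisted_subalg \<kappa> \<epsilon>"
    by (simp add: twisted_subalg_def subalg_gen_1)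
  ultimately show ?case
    by (auto intro: in_Y_tensor_B_tensor[of _ _ _ _ 0 _ 0] homogeneous_const homogeneous_1)
next
  case (add x y)
  then show ?case by (simp add: Delta_def fa_hom_add in_Y_tensor_B_add)
next
  case (mult x y)
  then show ?case by (simp add: Delta_def fa_mult_eq_times fa_hom_mult in_Y_tensor_B_mult)
qed

theorem proposition3p5:
  fixes m n :: nat and s \<epsilon> :: "nat \<Rightarrow> int"
  assumes "\<forall>i < m + n. s i = 1 \<or> s i = -1"
    and "card {i. i < m + n \<and> s i = 1} = m"
    and "\<forall>i < m + n. \<epsilon> i = 1 \<or> \<epsilon> i = -1"
  shows "(\<forall>r i j. i < m + n \<longrightarrow> j < m + n \<longrightarrow>
            Delta (m + n) (bc (m + n) \<epsilon> r i j)
            - (\<Sum>a<m + n. \<Sum>c<m + n.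
                 fa_const (sgn ((par s c + par s j) * (par s a + par s c))) \<cdot>
                 (\<Sum>p\<le>r. \<Sum>q\<le>r - p.
                    fa_const (sgn q) \<cdot> (iota1 (tc p i a \<cdot> tpc (m + n) q c j)
                      \<cdot> iota2 (bc (m + n) \<epsilon> (r - p - q) a c))))
            \<in> tens_ideal (m + n) s)
       \<and> (\<forall>x \<in> twisted_subalg (m + n) \<epsilon>. \<exists>ps :: (ygen fa \<times> ygen fa) list.
            (\<forall>(y, z) \<in> set ps. z \<in> twisted_subalg (m + n) \<epsilon>) \<and>
            Delta (m + n) x - (\<Sum>(y, z) \<leftarrow> ps. iota1 y \<cdot> iota2 z) \<in> tens_ideal (m + n) s)"
proof -
  have "in_Y_tensor_B (m + n) \<epsilon> s (Delta (m + n) x)" if "x \<in> twisted_subalg (m + n) \<epsilon>" for x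
    using that by (rule Delta_twisted_subalg)
  then show ?thesis
    using Delta_bc[where \<kappa> = "m + n" and \<epsilon> = \<epsilon> and s = s]
    unfolding in_Y_tensor_B_def fa_cong_def tens_ideal_def fa_mult_eq_times
    by fastforce
qed

end
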